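(* Let $u$ be a one-sided Sturmian sequence over $\{0,1\}$, let $X_u^+$ be the closure of $\{\sigma^n u : n\in\mathbb N\}$, and let $l=l_1l_2l_3\dots$ be the left special sequence of $X_u^+$, with $L_n=l_1\dots l_n$ for $n\ge 1$ and $L_0$ the empty block. Then the HB diagram of $X_u^+$ is the directed graph whose vertices are $0$, $1$, $0L_n$ and $1L_n$ for $n\ge 1$, and whose arrows are exactly the following: (1) if $l_1=0$: $0\to 1$, $0\to 00$ and $1\to 10$; if $l_1=1$: $1\to 0$, $1\to 11$ and $0\to 01$; (2) $0L_n\to 0L_{n+1}$ and $1L_n\to 1L_{n+1}$ for all $n\ge 1$; (3) whenever $xL_n$ and $wL_m$ ($x,w\in\{0,1\}$, $n>m\ge 0$) are consecutive right special significant blocks: (a) if $x\neq w$, then $xL_n\to wL_{m+1}$; (b) if $x=w$, then $xL_n\to \mathrm{sig}(wL_m y)$, where $y\in\{0,1\}$, $y\neq l_{m+1}$.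
   Context: A sequence $u\in\{0,1\}^{\mathbb N}$ is Sturmian if for every $n\ge1$ exactly $n+1$ distinct blocks of length $n$ occur in $u$. Let $\tilde X_u=\{x\in\{0,1\}^{\mathbb Z}: x_px_{p+1}\dots\in X_u^+ \text{ for all } p\in\mathbb Z\}$ be the natural extension; the languages (sets of finite blocks occurring) of $u$, $X_u^+$ and $\tilde X_u$ coincide. For each $n$ there is a unique block $L_n$ of length $n$ with both $0L_n$ and $1L_n$ in the language (left special block), and these are the prefixes of a single infinite sequence $l=l_1l_2\dots$, the left special sequence. A block $v$ is right special if both $v0$ and $v1$ are in the language; there is exactly one right special block of each length. For a block $a_{-n}\dots a_0$ in the language, $\mathrm{fol}(a_{-n}\dots a_0)=\{b_0b_1\dots\in X_u^+:\exists b\in\tilde X_u,\ b_{-n}\dots b_0=a_{-n}\dots a_0\}$. A block $a_{-n}\dots a_0$ ($n\ge1$) is significant if $\mathrm{fol}(a_{-n}\dots a_0)\subsetneq \mathrm{fol}(a_{-n+1}\dots a_0)$; the blocks $0$ and $1$ are also counted as significant. $\mathrm{sig}(a_{-n}\dots a_0)$ denotes the longest significant suffix of $a_{-n}\dots a_0$. The HB diagram has as vertices the significant blocks, with an arrow $\alpha\to\beta$ iff there is a symbol $b$ with $\alpha b$ in the language and $\beta=\mathrm{sig}(\alpha b)$. Two right special significant blocks of lengths $m+1<n+1$ are consecutive if there is no right special significant block of length strictly between $m+1$ and $n+1$. *)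

theory Defs
  imports Main
begin

text \<open>Alphabet {0,1} is encoded as bool: False = 0, True = 1.
  One-sided sequences are nat => bool, two-sided ones int => bool,
  finite blocks are lists (first element = leftmost symbol).\<close>

definition lang :: "(nat \<Rightarrow> bool) \<Rightarrow> bool list set" where
  "lang u = {w. \<exists>i. w = map u [i..<i + length w]}"

definition sturmian :: "(nat \<Rightarrow> bool) \<Rightarrow> bool" where
  "sturmian u \<longleftrightarrow> (\<forall>n\<ge>1. card {w \<in> lang u. length w = n} = n + 1)"

text \<open>Closure of the shift orbit of u in the product topology: exactly the
  sequences all of whose finite blocks occur in u.\<close>
definition Xplus :: "(nat \<Rightarrow> bool) \<Rightarrow> (nat \<Rightarrow> bool) set" where
  "Xplus u = {x. \<forall>i n. map x [i..<i + n] \<in> lang u}"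

definition Xtilde :: "(nat \<Rightarrow> bool) \<Rightarrow> (int \<Rightarrow> bool) set" where
  "Xtilde u = {x. \<forall>p. (\<lambda>k. x (p + int k)) \<in> Xplus u}"

definition L :: "(nat \<Rightarrow> bool) \<Rightarrow> nat \<Rightarrow> bool list" where
  "L u n = (THE w. length w = n \<and> False # w \<in> lang u \<and> True # w \<in> lang u)"

text \<open>Left special sequence, 1-indexed: lsym u k = l_k (k >= 1).\<close>
definition lsym :: "(nat \<Rightarrow> bool) \<Rightarrow> nat \<Rightarrow> bool" where
  "lsym u k = L u k ! (k - 1)"

definition right_special :: "(nat \<Rightarrow> bool) \<Rightarrow> bool list \<Rightarrow> bool" where
  "right_special u v \<longleftrightarrow> v @ [False] \<in> lang u \<and> v @ [True] \<in> lang u"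

text \<open>fol(a_{-n}..a_0): the block w = [a_{-n},...,a_0] sits at positions -n..0.\<close>
definition fol :: "(nat \<Rightarrow> bool) \<Rightarrow> bool list \<Rightarrow> (nat \<Rightarrow> bool) set" where
  "fol u w = {b \<in> Xplus u. \<exists>x \<in> Xtilde u.
      (\<forall>k < length w. x (int k - int (length w) + 1) = w ! k) \<and> (\<forall>i. b i = x (int i))}"

definition significant :: "(nat \<Rightarrow> bool) \<Rightarrow> bool list \<Rightarrow> bool" where
  "significant u w \<longleftrightarrow> w \<in> lang u \<and>
     (length w = 1 \<or> (length w \<ge> 2 \<and> fol u w \<subset> fol u (tl w)))"

definition sig :: "(nat \<Rightarrow> bool) \<Rightarrow> bool list \<Rightarrow> bool list" where
  "sig u w = drop (LEAST k. significant u (drop k w)) w"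

definition HB_vertices :: "(nat \<Rightarrow> bool) \<Rightarrow> bool list set" where
  "HB_vertices u = {w. significant u w}"

definition HB_arrows :: "(nat \<Rightarrow> bool) \<Rightarrow> (bool list \<times> bool list) set" where
  "HB_arrows u = {(\<alpha>, \<beta>). significant u \<alpha> \<and>
      (\<exists>b. \<alpha> @ [b] \<in> lang u \<and> \<beta> = sig u (\<alpha> @ [b]))}"

definition consecutive_rss :: "(nat \<Rightarrow> bool) \<Rightarrow> bool list \<Rightarrow> bool list \<Rightarrow> bool" where
  "consecutive_rss u v v' \<longleftrightarrow>
     right_special u v \<and> significant u v \<and> right_special u v' \<and> significant u v' \<and>
     length v < length v' \<and>
     \<not> (\<exists>z. right_special u z \<and> significant u z \<and>
            length v < length z \<and> length z < length v')"

end

(*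
  A Sturmian sequence has n + 1 factors of each length n and is not ultimately periodic, hence
  recurrent; so every factor extends to the left, and there is exactly one right special and
  one left special factor L_n of each length.  A block a t whose suffix t is not left special
  has the same followers as t, while x L_n and L_n are separated by a suitable continuation;
  hence the significant blocks of length at least 2 are exactly the blocks x L_n.

  The language is closed under reversal: a bispecial palindrome B has both mixed extensions
  e B (not e), since between consecutive returns of B the letter after one occurrence equals
  the letter before the next.  Thus a right special L_n is a palindrome and x L_n can only be
  right special for x = l_(n+1).  An arrow out of x L_n reads either l_(n+1), leading to
  x L_(n+1), or the other letter b; then x L_n is right special, all suffixes of x L_n b longer
  than w L_m b are insignificant, where w L_m is the previous right special significant
  block, and b = l_(m+1) exactly when x differs from w.
*)
theory Submission
  imports Defs
begin

section \<open>Factors and factor complexity\<close>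

definition window :: "(nat \<Rightarrow> 'a) \<Rightarrow> nat \<Rightarrow> nat \<Rightarrow> 'a list" where
  "window c i n = map c [i..<i + n]"

lemma length_window [simp]: "length (window c i n) = n"
  by (simp add: window_def)

lemma nth_window [simp]: "k < n \<Longrightarrow> window c i n ! k = c (i + k)"
  by (simp add: window_def)

lemma window_eqI: "length w = n \<Longrightarrow> (\<And>k. k < n \<Longrightarrow> c (i + k) = w ! k) \<Longrightarrow> window c i n = w"
  by (rule nth_equalityI) auto

lemma window_Suc_snoc: "window c i (Suc n) = window c i n @ [c (i + n)]"
  by (simp add: window_def)

lemma window_Suc_Cons: "window c i (Suc n) = c i # window c (Suc i) n"
  by (simp add: window_def upt_conv_Cons del: upt_Suc)

lemma window_Suc_Suc: "window c i (Suc (Suc n)) = c i # window c (Suc i) n @ [c (Suc i + n)]"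
  unfolding window_Suc_Cons[of c i "Suc n"] window_Suc_snoc[of c "Suc i" n] ..

lemma take_window: "take k (window c i n) = window c i (min k n)"
  by (rule nth_equalityI) auto

lemma drop_window: "drop k (window c i n) = window c (i + k) (n - k)"
  by (rule nth_equalityI) (auto simp: add.assoc)

lemma window_shift: "window (\<lambda>t. c (i + t)) j n = window c (i + j) n"
  by (rule nth_equalityI) (auto simp: add.assoc)

lemma window_in_lang [simp]: "window u i n \<in> lang u"
  unfolding lang_def window_def by auto

lemma lang_iff_window: "w \<in> lang u \<longleftrightarrow> (\<exists>i. window u i (length w) = w)"
  unfolding lang_def window_def mem_Collect_eq by (rule ex_cong1) (rule eq_commute)

lemma Nil_in_lang [simp]: "[] \<in> lang u"
  by (metis length_0_conv length_window window_in_lang)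

lemma lang_take: "w \<in> lang u \<Longrightarrow> take k w \<in> lang u"
proof -
  assume "w \<in> lang u"
  then obtain i where "window u i (length w) = w" by (auto simp: lang_iff_window)
  then have "window u i (length (take k w)) = take k w"
    using take_window[of k u i "length w"] by (simp add: min.commute)
  then show ?thesis by (metis window_in_lang)
qed

lemma lang_drop: "w \<in> lang u \<Longrightarrow> drop k w \<in> lang u"
proof -
  assume "w \<in> lang u"
  then obtain i where "window u i (length w) = w" by (auto simp: lang_iff_window)
  then have "window u (i + k) (length (drop k w)) = drop k w"
    using drop_window[of k u i "length w"] by simp
  then show ?thesis by (metis window_in_lang)
qed

lemma lang_appendD1: "w @ s \<in> lang u \<Longrightarrow> w \<in> lang u"
  using lang_take[of "w @ s" u "length w"] by simp

lemma lang_appendD2: "p @ w \<in> lang u \<Longrightarrow> w \<in> lang u"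
  using lang_drop[of "p @ w" u "length p"] by simp

lemma lang_ConsD: "a # w \<in> lang u \<Longrightarrow> w \<in> lang u"
  using lang_appendD2[of "[a]"] by simp

lemma lang_snoc_ex: "w \<in> lang u \<Longrightarrow> \<exists>b. w @ [b] \<in> lang u"
  unfolding lang_iff_window by (metis length_Suc_conv_rev length_window window_Suc_snoc)

definition factors :: "(nat \<Rightarrow> bool) \<Rightarrow> nat \<Rightarrow> bool list set" where
  "factors u n = {w \<in> lang u. length w = n}"

definition left_special :: "(nat \<Rightarrow> bool) \<Rightarrow> bool list \<Rightarrow> bool" where
  "left_special u w \<longleftrightarrow> False # w \<in> lang u \<and> True # w \<in> lang u"

lemma finite_factors [simp]: "finite (factors u n)"
proof (rule finite_subset)
  show "factors u n \<subseteq> {xs. set xs \<subseteq> UNIV \<and> length xs = n}"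
    by (auto simp: factors_def)
qed (rule finite_lists_length_eq, simp)

lemma factors_0: "factors u 0 = {[]}"
  by (auto simp: factors_def)

lemma right_special_in_lang: "right_special u w \<Longrightarrow> w \<in> lang u"
  unfolding right_special_def using lang_appendD1 by blast

lemma left_special_in_lang: "left_special u w \<Longrightarrow> w \<in> lang u"
  unfolding left_special_def using lang_ConsD by blast

lemma right_special_appendD: "right_special u (p @ v) \<Longrightarrow> right_special u v"
  unfolding right_special_def by (metis append_assoc lang_appendD2)

lemma card_bool_pairs:
  assumes "finite T"
  shows "card {(b, w). w \<in> T \<and> P b w} =
    card {w \<in> T. P False w \<or> P True w} + card {w \<in> T. P False w \<and> P True w}"
proof -
  define A where "A b = {w \<in> T. P b w}" for b
  have fin: "finite (A b)" for b
    using assms by (simp add: A_def)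
  have "{(b, w). w \<in> T \<and> P b w} = Pair False ` A False \<union> Pair True ` A True"
  proof (intro equalityI subsetI)
    fix p assume "p \<in> {(b, w). w \<in> T \<and> P b w}"
    then obtain b w where "p = (b, w)" "w \<in> T" "P b w" by blast
    then show "p \<in> Pair False ` A False \<union> Pair True ` A True"
      by (cases b) (auto simp: A_def)
  qed (auto simp: A_def)
  also have "card \<dots> = card (Pair False ` A False) + card (Pair True ` A True)"
    by (rule card_Un_disjoint) (auto simp: fin)
  also have "\<dots> = card (A False) + card (A True)"
    by (simp add: card_image inj_on_def)
  also have "\<dots> = card (A False \<union> A True) + card (A False \<inter> A True)"
    by (rule card_Un_Int[OF fin fin])
  also have "A False \<union> A True = {w \<in> T. P False w \<or> P True w}"
    by (auto simp: A_def)
  also have "A False \<inter> A True = {w \<in> T. P False w \<and> P True w}"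
    by (auto simp: A_def)
  finally show ?thesis .
qed

lemma card_factors_Suc:
  "card (factors u (Suc n)) = card (factors u n) + card {w \<in> factors u n. right_special u w}"
proof -
  define E where "E = {(b, w). w \<in> factors u n \<and> w @ [b] \<in> lang u}"
  have "factors u (Suc n) = (\<lambda>(b, w). w @ [b]) ` E"
  proof (intro equalityI subsetI)
    fix v assume v: "v \<in> factors u (Suc n)"
    then obtain w b where vw: "v = w @ [b]"
      by (cases v rule: rev_cases) (auto simp: factors_def)
    with v have "(b, w) \<in> E"
      by (auto simp: E_def factors_def dest: lang_appendD1)
    with vw show "v \<in> (\<lambda>(b, w). w @ [b]) ` E"
      by (intro image_eqI[of v _ "(b, w)"]) simp_all
  qed (auto simp: E_def factors_def)
  moreover have "inj_on (\<lambda>(b, w). w @ [b]) E"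
    by (auto simp: inj_on_def)
  ultimately have "card (factors u (Suc n)) = card E"
    by (simp add: card_image)
  also have "\<dots> = card {w \<in> factors u n. w @ [False] \<in> lang u \<or> w @ [True] \<in> lang u}
      + card {w \<in> factors u n. right_special u w}"
    unfolding E_def right_special_def by (rule card_bool_pairs) simp
  also have "{w \<in> factors u n. w @ [False] \<in> lang u \<or> w @ [True] \<in> lang u} = factors u n"
  proof (intro equalityI subsetI)
    fix w assume w: "w \<in> factors u n"
    then obtain b where "w @ [b] \<in> lang u"
      using lang_snoc_ex by (auto simp: factors_def)
    with w show "w \<in> {w \<in> factors u n. w @ [False] \<in> lang u \<or> w @ [True] \<in> lang u}"
      by (cases b) auto
  qed auto
  finally show ?thesis .
qed

lemma card_factors_Suc_left:
  assumes "\<And>w. w \<in> lang u \<Longrightarrow> \<exists>a. a # w \<in> lang u"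
  shows "card (factors u (Suc n)) = card (factors u n) + card {w \<in> factors u n. left_special u w}"
proof -
  define E where "E = {(b, w). w \<in> factors u n \<and> b # w \<in> lang u}"
  have "factors u (Suc n) = (\<lambda>(b, w). b # w) ` E"
  proof (intro equalityI subsetI)
    fix v assume v: "v \<in> factors u (Suc n)"
    then obtain w b where vw: "v = b # w"
      by (cases v) (auto simp: factors_def)
    with v have "(b, w) \<in> E"
      by (auto simp: E_def factors_def dest: lang_ConsD)
    with vw show "v \<in> (\<lambda>(b, w). b # w) ` E"
      by (intro image_eqI[of v _ "(b, w)"]) simp_all
  qed (auto simp: E_def factors_def)
  moreover have "inj_on (\<lambda>(b, w). b # w) E"
    by (auto simp: inj_on_def)
  ultimately have "card (factors u (Suc n)) = card E"
    by (simp add: card_image)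
  also have "\<dots> = card {w \<in> factors u n. False # w \<in> lang u \<or> True # w \<in> lang u}
      + card {w \<in> factors u n. left_special u w}"
    unfolding E_def left_special_def by (rule card_bool_pairs) simp
  also have "{w \<in> factors u n. False # w \<in> lang u \<or> True # w \<in> lang u} = factors u n"
  proof (intro equalityI subsetI)
    fix w assume w: "w \<in> factors u n"
    then obtain b where "b # w \<in> lang u"
      using assms by (auto simp: factors_def)
    with w show "w \<in> {w \<in> factors u n. False # w \<in> lang u \<or> True # w \<in> lang u}"
      by (cases b) auto
  qed auto
  finally show ?thesis .
qed

definition ultimately_periodic :: "(nat \<Rightarrow> 'a) \<Rightarrow> bool" where
  "ultimately_periodic c \<longleftrightarrow> (\<exists>i j. i < j \<and> (\<forall>t. c (i + t) = c (j + t)))"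

lemma window_eq_Suc:
  assumes "window c i n = window c j n" and "\<not> right_special c (window c i n)"
  shows "c (i + n) = c (j + n)" and "window c (Suc i) n = window c (Suc j) n"
proof -
  have "window c i n @ [c (i + n)] \<in> lang c" and "window c i n @ [c (j + n)] \<in> lang c"
    using assms(1) by (metis window_Suc_snoc window_in_lang)+
  with assms(2) show "c (i + n) = c (j + n)"
    unfolding right_special_def by (cases "c (i + n)"; cases "c (j + n)") auto
  then have "window c i (Suc n) = window c j (Suc n)"
    using assms(1) by (simp add: window_Suc_snoc)
  then show "window c (Suc i) n = window c (Suc j) n"
    by (metis list.inject window_Suc_Cons)
qed

lemma window_eq_add:
  assumes "window c i n = window c j n"
    and "\<And>t. t < s \<Longrightarrow> \<not> right_special c (window c (i + t) n)"
  shows "window c (i + s) n = window c (j + s) n"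
  using assms(2)
proof (induction s)
  case (Suc s)
  have "window c (i + s) n = window c (j + s) n"
    by (rule Suc.IH) (simp add: Suc.prems)
  then show ?case
    using window_eq_Suc(2)[of c "i + s" n "j + s"] Suc.prems[of s] by simp
qed (simp add: assms(1))

text \<open>Without right special factors of length \<open>m\<close>, each window of length \<open>m\<close>
  determines all later letters; by pigeonhole two windows coincide.\<close>
lemma ultimately_periodic_if_no_right_special:
  assumes "\<And>w. length w = m \<Longrightarrow> \<not> right_special c w"
  shows "ultimately_periodic c"
proof -
  let ?N = "card (factors c m)"
  have "(\<lambda>i. window c i m) ` {..?N} \<subseteq> factors c m"
    by (auto simp: factors_def)
  then have "card ((\<lambda>i. window c i m) ` {..?N}) < card {..?N}"
    by (metis card_atMost card_mono finite_factors le_imp_less_Suc)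
  then have "\<not> inj_on (\<lambda>i. window c i m) {..?N}"
    using card_image by fastforce
  then obtain i j where "i \<noteq> j" "window c i m = window c j m"
    unfolding inj_on_def by blast
  then obtain a b where ab: "a < b" "window c a m = window c b m"
    by (cases "i < j") (auto simp: neq_iff)
  have windows: "window c (a + s) m = window c (b + s) m" for s
    using window_eq_add[OF ab(2)] assms by simp
  have "c (a + t) = c (b + t)" for t
  proof (cases "t < m")
    case True
    then show ?thesis
      using ab(2) by (metis nth_window)
  next
    case False
    then obtain s where "t = s + m"
      by (metis add.commute le_add_diff_inverse not_less)
    then show ?thesis
      using window_eq_Suc(1)[OF windows assms] by (simp add: add.assoc)
  qed
  with ab(1) show ?thesis
    by (auto simp: ultimately_periodic_def)
qed

lemma ultimately_periodic_if_card_factors_le: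
  assumes "card (factors c n) \<le> n"
  shows "ultimately_periodic c"
proof (rule ccontr)
  assume "\<not> ultimately_periodic c"
  then have "\<exists>w. length w = m \<and> right_special c w" for m
    using ultimately_periodic_if_no_right_special by blast
  then have "{w \<in> factors c m. right_special c w} \<noteq> {}" for m
    by (auto simp: factors_def dest: right_special_in_lang)
  then have pos: "card {w \<in> factors c m. right_special c w} \<ge> 1" for m
    by (simp add: Suc_le_eq card_gt_0_iff)
  have "card (factors c k) \<ge> k + 1" for k
  proof (induction k)
    case (Suc k)
    then show ?case
      using pos[of k] card_factors_Suc[of c k] by simp
  qed (simp add: factors_0)
  with assms show False
    by (metis Suc_eq_plus1 not_less_eq_eq)
qed

lemma ex1_factor_if_card_eq_1:
  assumes "card {w \<in> factors u n. P w} = 1" and "\<And>w. P w \<Longrightarrow> w \<in> lang u"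
  shows "\<exists>!v. length v = n \<and> P v"
proof -
  obtain z where z: "{w \<in> factors u n. P w} = {z}"
    using assms(1) card_1_singletonE by blast
  show ?thesis
  proof (rule ex1I)
    show "length z = n \<and> P z"
      using z by (auto simp: factors_def)
  next
    fix v assume "length v = n \<and> P v"
    then have "v \<in> {w \<in> factors u n. P w}"
      using assms(2) by (simp add: factors_def)
    then show "v = z"
      using z by blast
  qed
qed

section \<open>Sturmian sequences: recurrence and special factors\<close>

locale sturmian_seq =
  fixes u :: "nat \<Rightarrow> bool"
  assumes sturmian: "sturmian u"
begin

lemma card_factors: "card (factors u n) = n + 1"
  using sturmian by (cases "n = 0") (auto simp: sturmian_def factors_def[symmetric] factors_0)

text \<open>If \<open>u\<close> had period \<open>j - i\<close> from \<open>i\<close> on, its factors of length \<open>j\<close> would all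
  start before \<open>j\<close>.\<close>
lemma not_ultimately_periodic: "\<not> ultimately_periodic u"
proof
  assume "ultimately_periodic u"
  then obtain i j where ij: "i < j" "\<forall>t. u (i + t) = u (j + t)"
    by (auto simp: ultimately_periodic_def)
  have early: "window u k n \<in> (\<lambda>k. window u k n) ` {..<j}" for k n
  proof (induction k rule: less_induct)
    case (less k)
    show ?case
    proof (cases "k < j")
      case False
      then have "window u k n = window u (k - (j - i)) n"
        using ij(2)[rule_format, of "k - j + _"] ij(1)
        by (intro nth_equalityI) (auto simp: algebra_simps)
      moreover have "k - (j - i) < k"
        using ij(1) False by simp
      ultimately show ?thesis
        using less.IH by metis
    qed auto
  qed
  have "factors u j \<subseteq> (\<lambda>k. window u k j) ` {..<j}"
    using early by (auto simp: factors_def lang_iff_window) metis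
  then have "card (factors u j) \<le> j"
    by (metis card_image_le card_lessThan card_mono finite_imageI finite_lessThan le_trans)
  then show False
    by (simp add: card_factors)
qed

text \<open>Otherwise the tail after \<open>j\<close> would have at most \<open>|w|\<close> factors of length \<open>|w|\<close>.\<close>
lemma recurrent:
  assumes "w \<in> lang u"
  shows "\<exists>i\<ge>j. window u i (length w) = w"
proof (rule ccontr)
  assume late: "\<not> (\<exists>i\<ge>j. window u i (length w) = w)"
  define v where "v = (\<lambda>t. u (j + t))"
  have "factors v (length w) \<subseteq> factors u (length w) - {w}"
    using late by (auto simp: factors_def lang_iff_window v_def window_shift)
  moreover have "w \<in> factors u (length w)"
    using assms by (simp add: factors_def)
  ultimately have "card (factors v (length w)) \<le> card (factors u (length w)) - 1"
    by (metis card_Diff_singleton card_mono finite_Diff finite_factors)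
  then have "card (factors v (length w)) \<le> length w"
    by (simp add: card_factors)
  then have "ultimately_periodic v"
    by (rule ultimately_periodic_if_card_factors_le)
  then obtain a b where "a < b" "\<forall>t. u (j + a + t) = u (j + b + t)"
    by (auto simp: ultimately_periodic_def v_def add.assoc)
  then have "ultimately_periodic u"
    unfolding ultimately_periodic_def by (metis add_less_cancel_left)
  then show False
    using not_ultimately_periodic by blast
qed

lemma lang_Cons_ex: "w \<in> lang u \<Longrightarrow> \<exists>a. a # w \<in> lang u"
proof -
  assume "w \<in> lang u"
  then obtain i where "i \<ge> 1" "window u i (length w) = w"
    using recurrent by blast
  then have "window u (i - 1) (Suc (length w)) = u (i - 1) # w"
    by (simp add: window_Suc_Cons)
  then show ?thesis
    by (metis window_in_lang)
qed

lemma ex1_right_special: "\<exists>!v. length v = n \<and> right_special u v"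
proof -
  have "card {w \<in> factors u n. right_special u w} = 1"
    using card_factors_Suc[of u n] card_factors[of n] card_factors[of "Suc n"] by simp
  then show ?thesis
    using ex1_factor_if_card_eq_1 right_special_in_lang by blast
qed

lemma ex1_left_special: "\<exists>!v. length v = n \<and> left_special u v"
proof -
  have "card {w \<in> factors u n. left_special u w} = 1"
    using card_factors_Suc_left[OF lang_Cons_ex, of n] card_factors[of n] card_factors[of "Suc n"]
    by simp
  then show ?thesis
    using ex1_factor_if_card_eq_1 left_special_in_lang by blast
qed

lemma right_special_unique:
  "right_special u v \<Longrightarrow> right_special u v' \<Longrightarrow> length v = length v' \<Longrightarrow> v = v'"
  using ex1_right_special by blast

lemma right_special_Nil: "right_special u []"
  using ex1_right_special[of 0] by auto

lemma singleton_in_lang [simp]: "[b] \<in> lang u"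
  using right_special_Nil by (cases b) (auto simp: right_special_def)

lemma L_left_special: "left_special u (L u n)" and length_L [simp]: "length (L u n) = n"
  using theI'[OF ex1_left_special[of n]] by (auto simp: L_def left_special_def)

lemma L_unique: "left_special u w \<Longrightarrow> L u (length w) = w"
  using ex1_left_special L_left_special length_L by blast

lemma Cons_L_in_lang: "x # L u n \<in> lang u"
  using L_left_special by (cases x) (auto simp: left_special_def)

lemma L_0 [simp]: "L u 0 = []"
  using length_L[of 0] by blast

lemma take_L: "m \<le> n \<Longrightarrow> take m (L u n) = L u m"
  using L_unique[of "take m (L u n)"] L_left_special[of n]
  by (simp add: left_special_def min_absorb2) (metis lang_take take_Suc_Cons)

lemma L_Suc: "L u (Suc n) = L u n @ [lsym u (Suc n)]"
  using take_Suc_conv_app_nth[of n "L u (Suc n)"] take_L[of n "Suc n"] by (simp add: lsym_def)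

lemma L_1: "L u 1 = [lsym u 1]"
  using L_Suc[of 0] by simp

section \<open>Closure of the language under reversal\<close>

text \<open>Between two consecutive occurrences of a right special factor \<open>B\<close> all windows of
  length \<open>|B|\<close> are pairwise distinct: they are not right special, hence a repetition would
  propagate deterministically and produce an earlier return of \<open>B\<close>.\<close>
lemma return_time_le:
  assumes RS: "right_special u B"
    and r: "window u r (length B) = B" and q: "window u q (length B) = B" and "r < q"
    and gap: "\<And>s. r < s \<Longrightarrow> s < q \<Longrightarrow> window u s (length B) \<noteq> B"
  shows "q - r \<le> length B + 1"
proof -
  define N where "N = length B"
  define f where "f t = window u (r + t) N" for t
  have not_RS: "\<not> right_special u (window u s N)" if "r < s" "s < q" for s
    using right_special_unique[OF _ RS] gap[OF that] by (fastforce simp: N_def)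
  have distinct: False if "t1 < t2" "t2 < q - r" "f t1 = f t2" for t1 t2
  proof (cases "t1 = 0")
    case True
    moreover have "r + t2 < q"
      using that(2) by linarith
    ultimately show False
      using that gap[of "r + t2"] r by (simp add: f_def N_def)
  next
    case False
    have "window u (r + t1 + (q - r - t2)) N = window u (r + t2 + (q - r - t2)) N"
      using \<open>f t1 = f t2\<close> False that
      by (intro window_eq_add not_RS) (auto simp: f_def)
    then have "window u (r + t1 + (q - r - t2)) N = B"
      using that q by (simp add: N_def)
    moreover have "r < r + t1 + (q - r - t2)" "r + t1 + (q - r - t2) < q"
      using False that by auto
    ultimately show False
      using gap by (simp add: N_def)
  qed
  have "inj_on f {..<q - r}"
    by (rule inj_onI) (metis distinct lessThan_iff linorder_neqE_nat)
  then have "card (f ` {..<q - r}) = q - r"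
    by (simp add: card_image)
  moreover have "f ` {..<q - r} \<subseteq> factors u N"
    by (auto simp: f_def factors_def)
  ultimately have "q - r \<le> card (factors u N)"
    by (metis card_mono finite_factors)
  then show ?thesis
    by (simp add: card_factors N_def)
qed

text \<open>If the occurrences overlap, the letter after the first one sits at position
  \<open>|B| - (q - r)\<close> of the second, which mirrors position \<open>q - r - 1\<close> of the first.\<close>
lemma return_palindrome_last_letter:
  assumes RS: "right_special u B" and pal: "rev B = B"
    and r: "window u r (length B) = B" and q: "window u q (length B) = B" and "r < q"
    and gap: "\<And>s. r < s \<Longrightarrow> s < q \<Longrightarrow> window u s (length B) \<noteq> B"
  shows "u (r + length B) = u (q - 1)"
proof -
  define N where "N = length B"
  have "q - r \<le> N + 1"
    unfolding N_def by (rule return_time_le[OF RS r q \<open>r < q\<close> gap])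
  show ?thesis
  proof (cases "q - r = N + 1")
    case True
    then have "q - 1 = r + N"
      using \<open>r < q\<close> by linarith
    then show ?thesis
      by (simp add: N_def)
  next
    case False
    define k where "k = q - r"
    have k: "1 \<le> k" "k \<le> N"
      using \<open>q - r \<le> N + 1\<close> False \<open>r < q\<close> by (auto simp: k_def)
    have "u (r + N) = u (q + (N - k))"
      using k \<open>r < q\<close> by (simp add: k_def add.commute)
    also have "\<dots> = B ! (N - k)"
      using nth_window[of "N - k" N u q] q k by (simp only: N_def)
    also have "\<dots> = rev B ! (k - 1)"
      using k by (simp add: rev_nth N_def)
    also have "\<dots> = u (r + (k - 1))"
      using nth_window[of "k - 1" N u r] pal r k by (simp only: N_def)
    also have "r + (k - 1) = q - 1"
      using k \<open>r < q\<close> by (simp add: k_def)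
    finally show ?thesis
      by (simp add: N_def)
  qed
qed

text \<open>From one occurrence of \<open>B\<close> to the next, the letter after the former equals the
  letter before the latter.\<close>
lemma occurrences_preceded_by:
  assumes RS: "right_special u B" and pal: "rev B = B"
    and same: "\<And>r. window u r (length B) = B \<Longrightarrow> 1 \<le> r \<Longrightarrow> u (r - 1) = e \<Longrightarrow>
      u (r + length B) = e"
    and p: "window u p (length B) = B" "1 \<le> p" "u (p - 1) = e"
  shows "p \<le> r \<Longrightarrow> window u r (length B) = B \<Longrightarrow> u (r - 1) = e"
proof (induction r rule: less_induct)
  case (less r)
  show ?case
  proof (cases "r = p")
    case False
    define S where "S = {s. p \<le> s \<and> s < r \<and> window u s (length B) = B}"
    have "finite S" "p \<in> S"
      using False less.prems p(1) by (auto simp: S_def)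
    define r' where "r' = Max S"
    have r': "r' \<in> S"
      using Max_in \<open>finite S\<close> \<open>p \<in> S\<close> unfolding r'_def by blast
    have gap: "window u s (length B) \<noteq> B" if "r' < s" "s < r" for s
    proof
      assume "window u s (length B) = B"
      with r' that have "s \<in> S"
        by (auto simp: S_def)
      then show False
        using Max_ge[OF \<open>finite S\<close>] that(1) unfolding r'_def by fastforce
    qed
    have "u (r' - 1) = e"
      using less.IH[of r'] r' by (auto simp: S_def)
    then have "u (r' + length B) = e"
      using same[of r'] r' p(2) by (auto simp: S_def)
    moreover have "u (r' + length B) = u (r - 1)"
      using r' less.prems(2) gap
      by (intro return_palindrome_last_letter[OF RS pal]) (auto simp: S_def)
    ultimately show ?thesis
      by simp
  qed (use p in simp)
qed

lemma bispecial_palindrome_mixed_extension: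
  assumes LS: "left_special u B" and RS: "right_special u B" and pal: "rev B = B"
  shows "e # B @ [\<not> e] \<in> lang u"
proof (rule ccontr)
  assume missing: "e # B @ [\<not> e] \<notin> lang u"
  define N where "N = length B"
  have eBe: "e # B @ [e] \<in> lang u"
  proof -
    have "e # B \<in> lang u"
      using LS by (cases e) (auto simp: left_special_def)
    then obtain b where "(e # B) @ [b] \<in> lang u"
      using lang_snoc_ex by blast
    then show ?thesis
      using missing by (cases b; cases e) auto
  qed
  have nBn: "(\<not> e) # B @ [\<not> e] \<in> lang u"
  proof -
    have "B @ [\<not> e] \<in> lang u"
      using RS by (cases e) (auto simp: right_special_def)
    then obtain a where "a # B @ [\<not> e] \<in> lang u"
      using lang_Cons_ex by blast
    then show ?thesis
      using missing by (cases a; cases e) auto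
  qed
  have same: "u (r + N) = e" if "window u r N = B" "1 \<le> r" "u (r - 1) = e" for r
  proof -
    have "e # B @ [u (r + N)] \<in> lang u"
      using window_in_lang[of u "r - 1" "N + 2"] window_Suc_Suc[of u "r - 1" N] that
      by (simp del: window_in_lang)
    then show ?thesis
      using missing by (cases "u (r + N)"; cases e) auto
  qed
  obtain p where p: "window u p (N + 2) = e # B @ [e]"
    using eBe by (auto simp: lang_iff_window N_def)
  then have p': "window u (Suc p) N = B" "u p = e"
    using window_Suc_Suc[of u p N] by (auto simp: N_def)
  obtain i where i: "i \<ge> Suc p" "window u i (N + 2) = (\<not> e) # B @ [\<not> e]"
    using recurrent[OF nBn, of "Suc p"] by (auto simp: N_def)
  then have "window u (Suc i) N = B" "u i = (\<not> e)"
    using window_Suc_Suc[of u i N] by (auto simp: N_def)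
  moreover have "u (Suc i - 1) = e"
    using occurrences_preceded_by[OF RS pal, of e "Suc p" "Suc i"] same p' i(1) calculation(1)
    by (simp add: N_def)
  ultimately show False
    by simp
qed

lemma bispecial_palindrome_if_rev_bispecial:
  assumes IH: "\<And>x. x \<in> lang u \<Longrightarrow> length x \<le> Suc (length w) \<Longrightarrow> rev x \<in> lang u"
    and "right_special u (rev w)" and "left_special u (rev w)"
  shows "left_special u w" and "right_special u w" and "rev w = w"
proof -
  have "rev (rev w @ [b]) \<in> lang u" "rev (b # rev w) \<in> lang u" for b
    using assms(2,3) IH[of "rev w @ [b]"] IH[of "b # rev w"]
    by (cases b; auto simp: right_special_def left_special_def)+
  then show "left_special u w" "right_special u w"
    by (simp_all add: left_special_def right_special_def)
  then show "rev w = w"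
    using L_unique[OF assms(3)] L_unique[of w] by simp
qed

lemma rev_in_lang_step:
  assumes IH: "\<And>x. x \<in> lang u \<Longrightarrow> length x \<le> Suc (length w) \<Longrightarrow> rev x \<in> lang u"
    and cwd: "c # w @ [d] \<in> lang u"
  shows "d # rev w @ [c] \<in> lang u"
proof -
  have wc: "rev w @ [c] \<in> lang u"
    using IH[of "c # w"] lang_appendD1[of "c # w" "[d]"] cwd by simp
  have dw: "d # rev w \<in> lang u"
    using IH[of "w @ [d]"] lang_ConsD[of c "w @ [d]"] cwd by simp
  consider "\<not> right_special u (rev w)" | "\<not> left_special u (rev w)"
    | "right_special u (rev w)" "left_special u (rev w)"
    by blast
  then show ?thesis
  proof cases
    case 1
    obtain e where e: "(d # rev w) @ [e] \<in> lang u"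
      using lang_snoc_ex[OF dw] by blast
    then have "rev w @ [e] \<in> lang u"
      by (simp add: lang_ConsD)
    with 1 wc have "e = c"
      unfolding right_special_def by (cases e; cases c) auto
    with e show ?thesis
      by simp
  next
    case 2
    obtain e where e: "e # rev w @ [c] \<in> lang u"
      using lang_Cons_ex[OF wc] by blast
    then have "e # rev w \<in> lang u"
      using lang_appendD1[of "e # rev w" "[c]"] by simp
    with 2 dw have "e = d"
      unfolding left_special_def by (cases e; cases d) auto
    with e show ?thesis
      by simp
  next
    case 3
    then have "left_special u w" "right_special u w" and pal: "rev w = w"
      using bispecial_palindrome_if_rev_bispecial[OF IH] by blast+
    show ?thesis
    proof (cases "c = d")
      case False
      then show ?thesis
        using bispecial_palindrome_mixed_extension[OF \<open>left_special u w\<close> \<open>right_special u w\<close>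
            pal, of d] pal by (cases c; cases d) auto
    qed (use cwd pal in simp)
  qed
qed

lemma rev_in_lang: "v \<in> lang u \<Longrightarrow> rev v \<in> lang u"
proof (induction "length v" arbitrary: v rule: less_induct)
  case less
  show ?case
  proof (cases "length v \<le> 1")
    case True
    then have "rev v = v"
      by (cases v) auto
    with less.prems show ?thesis
      by simp
  next
    case False
    then obtain c v' where "v = c # v'" "v' \<noteq> []"
      by (cases v) auto
    then obtain w d where "v = c # w @ [d]"
      by (metis rev_exhaust)
    with less show ?thesis
      using rev_in_lang_step[of w c d] by simp
  qed
qed

lemma rev_L_if_right_special: "right_special u (L u n) \<Longrightarrow> rev (L u n) = L u n"
  using L_unique[of "rev (L u n)"] rev_in_lang
  by (fastforce simp: right_special_def left_special_def)

text \<open>Both \<open>l\<^sub>n\<^sub>+\<^sub>1 L\<^sub>n l\<^sub>n\<^sub>+\<^sub>1 = l\<^sub>n\<^sub>+\<^sub>1 L\<^sub>n\<^sub>+\<^sub>1\<close> and, since \<open>L\<^sub>n\<close> is then a bispecial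
  palindrome, \<open>l\<^sub>n\<^sub>+\<^sub>1 L\<^sub>n (\<not> l\<^sub>n\<^sub>+\<^sub>1)\<close> are factors; so \<open>l\<^sub>n\<^sub>+\<^sub>1 L\<^sub>n\<close> is the right special
  factor of length \<open>n + 1\<close>.\<close>
lemma right_special_Cons_L_eq_lsym:
  assumes "right_special u (x # L u n)"
  shows "x = lsym u (Suc n)"
proof -
  define l where "l = lsym u (Suc n)"
  have RS: "right_special u (L u n)"
    using assms right_special_appendD[where p = "[x]"] by simp
  have "l # L u n @ [l] \<in> lang u"
    using Cons_L_in_lang[of l "Suc n"] by (simp add: L_Suc l_def)
  moreover have "l # L u n @ [\<not> l] \<in> lang u"
    using bispecial_palindrome_mixed_extension[OF L_left_special RS rev_L_if_right_special[OF RS]] .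
  ultimately have "right_special u (l # L u n)"
    unfolding right_special_def by (cases l) auto
  then show ?thesis
    using right_special_unique[OF assms, of "l # L u n"] by (simp add: l_def)
qed

end

section \<open>The natural extension and significant blocks\<close>

lemma Xplus_iff_window: "c \<in> Xplus u \<longleftrightarrow> (\<forall>i n. window c i n \<in> lang u)"
  by (simp add: Xplus_def window_def)

lemma shift_in_Xplus: "c \<in> Xplus u \<Longrightarrow> (\<lambda>t. c (i + t)) \<in> Xplus u"
  by (simp add: Xplus_iff_window window_shift)

lemma shift_seq_in_Xplus: "(\<lambda>t. u (i + t)) \<in> Xplus u"
  by (simp add: Xplus_iff_window window_shift)

lemma Xplus_if_prefixes: "(\<And>n. window c 0 n \<in> lang u) \<Longrightarrow> c \<in> Xplus u"
  unfolding Xplus_iff_window by (metis add_0 drop_window lang_drop add_diff_cancel_left')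

lemma shift_in_Xtilde:
  assumes "y \<in> Xtilde u"
  shows "(\<lambda>z. y (z + d)) \<in> Xtilde u"
  unfolding Xtilde_def
proof (intro CollectI allI)
  fix p
  have "(\<lambda>k. y (p + d + int k)) \<in> Xplus u"
    using assms by (simp add: Xtilde_def)
  then show "(\<lambda>k. y (p + int k + d)) \<in> Xplus u"
    by (simp add: ac_simps)
qed

lemma Xtilde_block_in_lang:
  assumes "y \<in> Xtilde u" and "\<And>k. k < length w \<Longrightarrow> y (p + int k) = w ! k"
  shows "w \<in> lang u"
proof -
  have "window (\<lambda>k. y (p + int k)) 0 (length w) = w"
    by (rule window_eqI) (simp_all add: assms(2))
  moreover have "(\<lambda>k. y (p + int k)) \<in> Xplus u"
    using assms(1) by (simp add: Xtilde_def)
  ultimately show ?thesis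
    by (metis Xplus_iff_window)
qed

lemma fol_Cons_subset: "fol u (a # w) \<subseteq> fol u w"
proof
  fix b assume "b \<in> fol u (a # w)"
  then obtain y where y: "b \<in> Xplus u" "y \<in> Xtilde u" "\<forall>i. b i = y (int i)"
    "\<And>k. k < Suc (length w) \<Longrightarrow> y (int k - int (Suc (length w)) + 1) = (a # w) ! k"
    by (auto simp: fol_def)
  have "y (int k - int (length w) + 1) = w ! k" if "k < length w" for k
    using y(4)[of "Suc k"] that by simp
  with y(1-3) show "b \<in> fol u w"
    by (auto simp: fol_def)
qed

lemma fol_append_in_lang:
  assumes "b \<in> fol u w" and "\<And>k. k < length q \<Longrightarrow> b (Suc k) = q ! k"
  shows "w @ q \<in> lang u"
proof -
  obtain y where y: "y \<in> Xtilde u" "\<And>k. k < length w \<Longrightarrow> y (int k - int (length w) + 1) = w ! k"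
    "\<And>i. b i = y (int i)"
    using assms(1) by (auto simp: fol_def)
  show ?thesis
  proof (rule Xtilde_block_in_lang[OF y(1), where p = "1 - int (length w)"])
    fix k assume "k < length (w @ q)"
    then show "y (1 - int (length w) + int k) = (w @ q) ! k"
      using y(2)[of k] y(3)[of "Suc (k - length w)"] assms(2)[of "k - length w"]
      by (cases "k < length w") (auto simp: nth_append algebra_simps of_nat_diff)
  qed
qed

text \<open>Prepending a letter that keeps the sequence in \<open>X\<^sub>u\<^sup>+\<close>; iterated, it yields the
  negative half of a two-sided extension.\<close>
definition prepend :: "(nat \<Rightarrow> bool) \<Rightarrow> (nat \<Rightarrow> bool) \<Rightarrow> nat \<Rightarrow> bool" where
  "prepend u c = case_nat (SOME a. case_nat a c \<in> Xplus u) c"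

lemma prepend_Suc [simp]: "prepend u c (Suc i) = c i"
  by (simp add: prepend_def)

lemma funpow_prepend_shift: "((prepend u ^^ (j + k)) c) (i + k) = ((prepend u ^^ j) c) i"
  by (induction k arbitrary: i) simp_all

context sturmian_seq
begin

lemma ex_Cons_in_Xplus:
  assumes "c \<in> Xplus u"
  shows "\<exists>a. case_nat a c \<in> Xplus u"
proof -
  have prefix: "b # window c 0 N \<in> lang u" if "b # window c 0 N' \<in> lang u" "N \<le> N'" for b N N'
    using lang_take[OF that(1), of "Suc N"] that(2) by (simp add: take_window min_absorb1)
  obtain a where a: "\<forall>N. a # window c 0 N \<in> lang u"
  proof (cases "\<forall>N. False # window c 0 N \<in> lang u")
    case False
    then obtain N0 where N0: "False # window c 0 N0 \<notin> lang u"
      by blast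
    have "True # window c 0 N \<in> lang u" for N
    proof -
      obtain b where b: "b # window c 0 (max N N0) \<in> lang u"
        using lang_Cons_ex assms by (meson Xplus_iff_window)
      with N0 prefix[OF b, of N0] have "b = True"
        by (cases b) auto
      with prefix[OF b, of N] show ?thesis
        by simp
    qed
    then show ?thesis
      using that by blast
  qed blast
  have "window (case_nat a c) 0 (Suc N) = a # window c 0 N" for N
    by (rule nth_equalityI) (auto simp: nth_Cons split: nat.split)
  then have "window (case_nat a c) 0 n \<in> lang u" for n
    using a by (cases n) (auto simp: window_def)
  then show ?thesis
    using Xplus_if_prefixes by blast
qed

lemma prepend_in_Xplus: "c \<in> Xplus u \<Longrightarrow> prepend u c \<in> Xplus u"
  unfolding prepend_def using someI_ex[OF ex_Cons_in_Xplus] by blast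

lemma funpow_prepend_in_Xplus: "c \<in> Xplus u \<Longrightarrow> (prepend u ^^ k) c \<in> Xplus u"
  by (induction k) (simp_all add: prepend_in_Xplus)

lemma two_sided_extension:
  assumes "c \<in> Xplus u"
  shows "\<exists>y \<in> Xtilde u. \<forall>t. y (int t) = c t"
proof -
  define y where "y z = ((prepend u ^^ nat (- z)) c) (nat z)" for z
  have "(\<lambda>k. y (p + int k)) = (\<lambda>k. ((prepend u ^^ nat (- p)) c) (nat p + k))" for p
  proof
    fix k
    show "y (p + int k) = ((prepend u ^^ nat (- p)) c) (nat p + k)"
    proof (cases "p < 0 \<and> int k \<le> - p")
      case True
      then have "y (p + int k) = ((prepend u ^^ nat (- p - int k)) c) 0"
        by (simp add: y_def)
      also have "\<dots> = ((prepend u ^^ (nat (- p - int k) + k)) c) (0 + k)"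
        by (rule funpow_prepend_shift[symmetric])
      also have "nat (- p - int k) + k = nat (- p)"
        using True by auto
      finally show ?thesis
        using True by simp
    next
      case False
      then have "nat (p + int k) + nat (- p) = nat p + k"
        by auto
      then show ?thesis
        using funpow_prepend_shift[where j = 0 and k = "nat (- p)" and c = c and i = "nat (p + int k)"]
          False
        by (auto simp: y_def)
    qed
  qed
  then have "y \<in> Xtilde u"
    by (simp add: Xtilde_def shift_in_Xplus funpow_prepend_in_Xplus assms)
  moreover have "\<forall>t. y (int t) = c t"
    by (simp add: y_def)
  ultimately show ?thesis
    by blast
qed


lemma fol_of_occurrence:
  assumes "length w \<le> Suc j" and "window u (Suc j - length w) (length w) = w"
  shows "(\<lambda>t. u (j + t)) \<in> fol u w"
proof -
  obtain y where y: "y \<in> Xtilde u" "\<forall>t. y (int t) = u t"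
    using two_sided_extension[OF shift_seq_in_Xplus[of u 0]] by auto
  have "y (int k - int (length w) + 1 + int j) = w ! k" if "k < length w" for k
  proof -
    have "int k - int (length w) + 1 + int j = int (Suc j - length w + k)"
      using assms(1) that by simp
    then have "y (int k - int (length w) + 1 + int j) = u (Suc j - length w + k)"
      using y(2) by metis
    then show ?thesis
      using nth_window[OF that, of u "Suc j - length w"] assms(2) by simp
  qed
  moreover have "u (j + t) = y (int t + int j)" for t
    using y(2)[rule_format, of "j + t"] by (simp add: add.commute)
  ultimately show ?thesis
    unfolding fol_def mem_Collect_eq
    by (intro conjI shift_seq_in_Xplus bexI[OF _ shift_in_Xtilde[OF y(1), of "int j"]]) auto
qed

lemma fol_subset_fol_Cons:
  assumes "a # w \<in> lang u" and "\<not> left_special u w"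
  shows "fol u w \<subseteq> fol u (a # w)"
proof
  fix b assume "b \<in> fol u w"
  then obtain y where y: "b \<in> Xplus u" "y \<in> Xtilde u" "\<forall>i. b i = y (int i)"
    "\<And>k. k < length w \<Longrightarrow> y (int k - int (length w) + 1) = w ! k"
    by (auto simp: fol_def)
  have "y (- int (length w) + int k) = (y (- int (length w)) # w) ! k"
    if "k < length (y (- int (length w)) # w)" for k
    using that y(4)[of "k - 1"] by (cases k) (auto simp: algebra_simps)
  then have "y (- int (length w)) # w \<in> lang u"
    by (rule Xtilde_block_in_lang[OF y(2)])
  with assms have "y (- int (length w)) = a"
    unfolding left_special_def by (cases a; cases "y (- int (length w))") auto
  then have "y (int k - int (length (a # w)) + 1) = (a # w) ! k" if "k < length (a # w)" for k
    using that y(4)[of "k - 1"] by (cases k) auto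
  with y(1-3) show "b \<in> fol u (a # w)"
    by (auto simp: fol_def)
qed

text \<open>Otherwise every occurrence of \<open>(\<not> x) L\<^sub>n\<close> would be followed by an arbitrarily long
  left special factor, so \<open>u\<close> would coincide after any two such occurrences.\<close>
lemma separating_extension: "\<exists>q. x # L u n @ q \<notin> lang u \<and> (\<not> x) # L u n @ q \<in> lang u"
proof (rule ccontr)
  assume "\<not> ?thesis"
  then have follow: "(\<not> x) # L u n @ q \<in> lang u \<Longrightarrow> x # L u n @ q \<in> lang u" for q
    by blast
  have after: "window u (Suc j) (n + t) = L u (n + t)"
    if j: "window u j (Suc n) = (\<not> x) # L u n" for j t
  proof -
    define q where "q = window u (Suc j) (n + t)"
    have "(\<not> x) # q = window u j (Suc (n + t))"
      using j by (simp add: window_Suc_Cons q_def)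
    then have nq: "(\<not> x) # q \<in> lang u"
      by (metis window_in_lang)
    have "take n q = L u n"
      using j by (simp add: q_def take_window window_Suc_Cons)
    then have "q = L u n @ drop n q"
      by (metis append_take_drop_id)
    then have "x # q \<in> lang u"
      using follow[of "drop n q"] nq by simp
    with nq have "left_special u q"
      unfolding left_special_def by (cases x) auto
    then show ?thesis
      using L_unique by (metis q_def length_window)
  qed
  obtain i where i: "window u i (Suc n) = (\<not> x) # L u n"
    using Cons_L_in_lang[of "\<not> x" n] by (auto simp: lang_iff_window)
  obtain i' where i': "i' \<ge> Suc i" "window u i' (Suc n) = (\<not> x) # L u n"
    using recurrent[OF Cons_L_in_lang[of "\<not> x" n], of "Suc i"] by auto
  have "u (Suc i + s) = u (Suc i' + s)" for s
  proof -
    have "u (Suc i + s) = window u (Suc i) (n + Suc s) ! s"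
      by simp
    also have "\<dots> = window u (Suc i') (n + Suc s) ! s"
      by (simp only: after[OF i] after[OF i'(2)])
    also have "\<dots> = u (Suc i' + s)"
      by simp
    finally show ?thesis .
  qed
  with i'(1) have "ultimately_periodic u"
    unfolding ultimately_periodic_def by (metis Suc_le_eq Suc_mono)
  with not_ultimately_periodic show False ..
qed

lemma fol_Cons_L_neq: "fol u (x # L u n) \<noteq> fol u (L u n)"
proof
  assume eq: "fol u (x # L u n) = fol u (L u n)"
  obtain q where q: "x # L u n @ q \<notin> lang u" "(\<not> x) # L u n @ q \<in> lang u"
    using separating_extension by blast
  then obtain i where i: "window u i (Suc n + length q) = (\<not> x) # L u n @ q"
    by (auto simp: lang_iff_window)
  have "window u (Suc i) n = L u n"
    using arg_cong[OF i, of "take (Suc n)"] by (simp add: take_window window_Suc_Cons)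
  then have "(\<lambda>t. u (i + n + t)) \<in> fol u (L u n)"
    by (intro fol_of_occurrence) simp_all
  moreover have "u (i + n + Suc k) = q ! k" if "k < length q" for k
  proof -
    have "u (i + n + Suc k) = window u i (Suc n + length q) ! (Suc n + k)"
      using that by (simp add: add.assoc)
    also have "\<dots> = q ! k"
      by (simp only: i) (simp add: nth_append)
    finally show ?thesis .
  qed
  ultimately have "(x # L u n) @ q \<in> lang u"
    using eq fol_append_in_lang[of "\<lambda>t. u (i + n + t)" u "x # L u n" q] by simp
  with q(1) show False
    by simp
qed

lemma significant_iff:
  "significant u w \<longleftrightarrow> w \<in> lang u \<and> (length w = 1 \<or> (\<exists>x n. n \<ge> 1 \<and> w = x # L u n))"
proof
  assume sig: "significant u w"
  show "w \<in> lang u \<and> (length w = 1 \<or> (\<exists>x n. n \<ge> 1 \<and> w = x # L u n))"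
  proof (cases "length w = 1")
    case False
    with sig obtain a t where w: "w = a # t" "t \<noteq> []" "w \<in> lang u" "fol u w \<subset> fol u t"
      by (cases w) (auto simp: significant_def)
    then have "left_special u t"
      using fol_subset_fol_Cons by blast
    then have "t = L u (length t)"
      using L_unique by simp
    with w show ?thesis
      by (metis One_nat_def Suc_leI length_greater_0_conv)
  qed (use sig in \<open>simp add: significant_def\<close>)
next
  assume w: "w \<in> lang u \<and> (length w = 1 \<or> (\<exists>x n. n \<ge> 1 \<and> w = x # L u n))"
  show "significant u w"
  proof (cases "length w = 1")
    case False
    with w obtain x n where "n \<ge> 1" "w = x # L u n"
      by blast
    moreover have "fol u (x # L u n) \<subset> fol u (L u n)"
      using fol_Cons_subset fol_Cons_L_neq by blast
    ultimately show ?thesis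
      using w by (simp add: significant_def)
  qed (use w in \<open>simp add: significant_def\<close>)
qed


lemma HB_vertices_eq: "HB_vertices u = {[False], [True]} \<union> {x # L u n | x n. n \<ge> 1}"
proof -
  have letters: "w \<in> {[False], [True]} \<longleftrightarrow> length w = 1" for w :: "bool list"
    by (cases w) (auto simp: length_Suc_conv)
  show ?thesis
  proof (intro equalityI subsetI)
    fix w assume "w \<in> HB_vertices u"
    then have "length w = 1 \<or> (\<exists>x n. n \<ge> 1 \<and> w = x # L u n)"
      by (simp add: HB_vertices_def significant_iff)
    then show "w \<in> {[False], [True]} \<union> {x # L u n | x n. n \<ge> 1}"
      using letters by blast
  next
    fix w assume "w \<in> {[False], [True]} \<union> {x # L u n | x n. n \<ge> 1}"
    then consider "w = [False]" | "w = [True]" | x n where "n \<ge> 1" "w = x # L u n"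
      by blast
    then show "w \<in> HB_vertices u"
      by cases (auto simp: HB_vertices_def significant_iff Cons_L_in_lang)
  qed
qed


end

section \<open>Longest significant suffixes and the arrows of the HB diagram\<close>

lemma Least_add_shift:
  fixes P :: "nat \<Rightarrow> bool"
  assumes "\<And>k. k < a \<Longrightarrow> \<not> P k" and "P (a + m)"
  shows "(LEAST k. P k) = a + (LEAST k. P (a + k))"
proof (rule Least_equality)
  show "P (a + (LEAST k. P (a + k)))"
    using assms(2) by (rule LeastI)
next
  fix y assume "P y"
  with assms(1) have "a \<le> y"
    by (meson not_less)
  with \<open>P y\<close> have "(LEAST k. P (a + k)) \<le> y - a"
    by (intro Least_le) simp
  with \<open>a \<le> y\<close> show "a + (LEAST k. P (a + k)) \<le> y"
    by simp
qed

lemma sig_self: "significant u w \<Longrightarrow> sig u w = w"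
  unfolding sig_def by (simp add: Least_eq_0)

lemma sig_append_nonsignificant:
  assumes "\<And>k. k < length p \<Longrightarrow> \<not> significant u (drop k (p @ v))"
    and "significant u (drop m v)"
  shows "sig u (p @ v) = sig u v"
proof -
  have "(LEAST k. significant u (drop k (p @ v)))
      = length p + (LEAST k. significant u (drop (length p + k) (p @ v)))"
    by (rule Least_add_shift[where m = m]) (use assms in auto)
  then show ?thesis
    by (simp add: sig_def)
qed

lemma HB_arrows_iff:
  "(\<alpha>, \<beta>) \<in> HB_arrows u \<longleftrightarrow>
    significant u \<alpha> \<and> (\<exists>b. \<alpha> @ [b] \<in> lang u \<and> \<beta> = sig u (\<alpha> @ [b]))"
  by (simp add: HB_arrows_def)

context sturmian_seq
begin

lemma significant_Cons_L: "n \<ge> 1 \<Longrightarrow> significant u (x # L u n)"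
  using Cons_L_in_lang by (auto simp: significant_iff)

lemma significant_singleton [simp]: "significant u [b]"
  by (simp add: significant_def)

lemma ex_right_special_Cons_L: "right_special u (L u m) \<Longrightarrow> \<exists>w. right_special u (w # L u m)"
proof -
  assume RS: "right_special u (L u m)"
  obtain v where v: "length v = Suc m" "right_special u v"
    using ex1_right_special by blast
  then obtain w v' where "v = w # v'"
    by (cases v) auto
  with v RS have "v = w # L u m"
    using right_special_unique[of v' "L u m"] right_special_appendD[where p = "[w]" and v = v'] by simp
  with v show ?thesis
    by blast
qed

lemma drop_right_special_Cons_L:
  assumes "right_special u (x # L u n)" and "right_special u (w # L u m)" and "m \<le> n"
  shows "drop (n - m) (x # L u n) = w # L u m"
  using right_special_unique[OF _ assms(2), of "drop (n - m) (x # L u n)"] assms(1,3)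
    right_special_appendD[where p = "take (n - m) (x # L u n)"] by simp

lemma ex_previous_right_special_L:
  "0 < n \<Longrightarrow>
    \<exists>m<n. right_special u (L u m) \<and> (\<forall>j. m < j \<longrightarrow> j < n \<longrightarrow> \<not> right_special u (L u j))"
proof (induction n)
  case (Suc n)
  show ?case
  proof (cases "n = 0 \<or> right_special u (L u n)")
    case True
    then show ?thesis
      using right_special_Nil by (auto intro!: exI[of _ n])
  next
    case False
    with Suc.IH obtain m where "m < n" "right_special u (L u m)"
      "\<forall>j. m < j \<longrightarrow> j < n \<longrightarrow> \<not> right_special u (L u j)"
      by blast
    with False show ?thesis
      by (auto intro!: exI[of _ m] simp: less_Suc_eq)
  qed
qed simp

lemma consecutive_rss_Cons_L_iff:
  "consecutive_rss u (w # L u m) (x # L u n) \<longleftrightarrow>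
    right_special u (w # L u m) \<and> right_special u (x # L u n) \<and> m < n \<and>
    (\<forall>j. m < j \<longrightarrow> j < n \<longrightarrow> \<not> right_special u (L u j))"
proof
  assume c: "consecutive_rss u (w # L u m) (x # L u n)"
  have "\<not> right_special u (L u j)" if "m < j" "j < n" for j
  proof
    assume "right_special u (L u j)"
    then obtain y where "right_special u (y # L u j)"
      using ex_right_special_Cons_L by blast
    moreover have "significant u (y # L u j)"
      using significant_Cons_L that by simp
    ultimately show False
      using c that unfolding consecutive_rss_def by fastforce
  qed
  with c show "right_special u (w # L u m) \<and> right_special u (x # L u n) \<and> m < n \<and>
      (\<forall>j. m < j \<longrightarrow> j < n \<longrightarrow> \<not> right_special u (L u j))"
    by (simp add: consecutive_rss_def)
next
  assume rs: "right_special u (w # L u m) \<and> right_special u (x # L u n) \<and> m < n \<and>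
      (\<forall>j. m < j \<longrightarrow> j < n \<longrightarrow> \<not> right_special u (L u j))"
  have "significant u (w # L u m)" "significant u (x # L u n)"
    using rs significant_Cons_L by (cases m; simp)+
  moreover have False if z: "right_special u z" "significant u z"
    "Suc m < length z" "length z < Suc n" for z
  proof -
    obtain y j where "z = y # L u j"
      using z(2,3) by (auto simp: significant_iff)
    then show False
      using rs z right_special_appendD[where p = "[y]" and v = "L u j"] by auto
  qed
  ultimately show "consecutive_rss u (w # L u m) (x # L u n)"
    using rs unfolding consecutive_rss_def by fastforce
qed


lemma ex_consecutive_rss:
  assumes "right_special u (x # L u n)" and "0 < n"
  shows "\<exists>w m. consecutive_rss u (w # L u m) (x # L u n)"
proof -
  obtain m where m: "m < n" "right_special u (L u m)"
    "\<forall>j. m < j \<longrightarrow> j < n \<longrightarrow> \<not> right_special u (L u j)"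
    using ex_previous_right_special_L[OF assms(2)] by blast
  obtain w where "right_special u (w # L u m)"
    using ex_right_special_Cons_L[OF m(2)] by blast
  with assms(1) m show ?thesis
    by (auto simp: consecutive_rss_Cons_L_iff)
qed

text \<open>A significant suffix \<open>z L\<^sub>j\<close> of \<open>x L\<^sub>n b\<close> ends in \<open>L\<^sub>j = L\<^sub>j\<^sub>-\<^sub>1 l\<^sub>j\<close>, so
  \<open>b = l\<^sub>j\<close> and \<open>L\<^sub>j\<^sub>-\<^sub>1\<close>, a suffix of the right special \<open>L\<^sub>n\<close>, is right special.\<close>
lemma not_significant_drop_Cons_L_snoc:
  assumes RS: "right_special u (L u n)"
    and gap: "\<forall>j. m < j \<longrightarrow> j < n \<longrightarrow> \<not> right_special u (L u j)"
    and b: "b \<noteq> lsym u (Suc n)" and k: "k < n - m"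
  shows "\<not> significant u (drop k (x # L u n @ [b]))"
proof
  assume "significant u (drop k (x # L u n @ [b]))"
  moreover have "length (drop k (x # L u n @ [b])) \<noteq> 1"
    using k by simp
  ultimately obtain z j where zj: "drop k (x # L u n @ [b]) = z # L u j"
    by (auto simp: significant_iff)
  have "length (drop k (x # L u n @ [b])) = length (z # L u j)"
    by (simp only: zj)
  then have "j = Suc (n - k)"
    using k by simp
  moreover have "drop k (L u n) @ [b] = L u j"
    using arg_cong[OF zj, of tl] k by (simp add: tl_drop)
  ultimately have "L u (n - k) = drop k (L u n)" and b_eq: "b = lsym u (Suc (n - k))"
    by (simp_all add: L_Suc)
  moreover have "right_special u (drop k (L u n))"
    using RS right_special_appendD[where p = "take k (L u n)"] by simp
  ultimately have "right_special u (L u (n - k))"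
    by simp
  with gap k b b_eq show False
    by (cases "k = 0") auto
qed

lemma sig_Cons_L_snoc_reduce:
  assumes c: "consecutive_rss u (w # L u m) (x # L u n)" and b: "b \<noteq> lsym u (Suc n)"
  shows "sig u (x # L u n @ [b]) = sig u (w # L u m @ [b])"
proof -
  have RS: "right_special u (x # L u n)" "right_special u (w # L u m)" and "m < n"
    and gap: "\<forall>j. m < j \<longrightarrow> j < n \<longrightarrow> \<not> right_special u (L u j)"
    using c by (simp_all add: consecutive_rss_Cons_L_iff)
  define p where "p = take (n - m) (x # L u n)"
  have "x # L u n = p @ w # L u m"
    using drop_right_special_Cons_L[OF RS] \<open>m < n\<close> by (metis p_def append_take_drop_id less_imp_le)
  then have split: "x # L u n @ [b] = p @ (w # L u m @ [b])"
    by (metis append_Cons append_assoc)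
  have "\<not> significant u (drop k (p @ (w # L u m @ [b])))" if "k < length p" for k
    unfolding split[symmetric]
    using not_significant_drop_Cons_L_snoc[OF right_special_appendD[where p = "[x]"] gap b]
      RS(1) that by (simp add: p_def)
  moreover have "significant u (drop (Suc m) (w # L u m @ [b]))"
    by simp
  ultimately show ?thesis
    unfolding split by (rule sig_append_nonsignificant)
qed

text \<open>As \<open>x = l\<^sub>n\<^sub>+\<^sub>1\<close> and \<open>w = l\<^sub>m\<^sub>+\<^sub>1\<close>, the letter \<open>\<not> l\<^sub>n\<^sub>+\<^sub>1\<close> equals \<open>l\<^sub>m\<^sub>+\<^sub>1\<close>
  exactly when \<open>x \<noteq> w\<close>.\<close>
lemma sig_Cons_L_other_extension:
  assumes c: "consecutive_rss u (w # L u m) (x # L u n)"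
  shows "x # L u n @ [\<not> lsym u (Suc n)] \<in> lang u"
    and "sig u (x # L u n @ [\<not> lsym u (Suc n)]) =
      (if x = w then sig u (w # L u m @ [\<not> lsym u (Suc m)]) else w # L u (Suc m))"
proof -
  have RS: "right_special u (x # L u n)" "right_special u (w # L u m)"
    using c by (simp_all add: consecutive_rss_Cons_L_iff)
  then show "x # L u n @ [\<not> lsym u (Suc n)] \<in> lang u"
    by (cases "lsym u (Suc n)") (auto simp: right_special_def)
  have "x = lsym u (Suc n)" "w = lsym u (Suc m)"
    using right_special_Cons_L_eq_lsym RS by blast+
  moreover have "sig u (w # L u m @ [w]) = w # L u (Suc m)" if "w = lsym u (Suc m)"
    using sig_self[OF significant_Cons_L[of "Suc m" w]] that by (simp add: L_Suc)
  ultimately show "sig u (x # L u n @ [\<not> lsym u (Suc n)]) =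
      (if x = w then sig u (w # L u m @ [\<not> lsym u (Suc m)]) else w # L u (Suc m))"
    using sig_Cons_L_snoc_reduce[OF c, of "\<not> lsym u (Suc n)"] by (cases x; cases w) auto
qed


lemma right_special_if_other_extension:
  assumes "x # L u n @ [b] \<in> lang u" and "b \<noteq> lsym u (Suc n)"
  shows "right_special u (x # L u n)"
proof -
  have "x # L u n @ [lsym u (Suc n)] \<in> lang u"
    using Cons_L_in_lang[of x "Suc n"] by (simp add: L_Suc)
  with assms show ?thesis
    unfolding right_special_def by (cases b) auto
qed

lemma sig_Cons_L_Suc: "sig u (x # L u n @ [lsym u (Suc n)]) = x # L u (n + 1)"
  using sig_self[OF significant_Cons_L[of "Suc n" x]] by (simp add: L_Suc)

lemma HB_arrow_Cons_L_Suc: "n \<ge> 1 \<Longrightarrow> (x # L u n, x # L u (n + 1)) \<in> HB_arrows u"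
  using Cons_L_in_lang[of x "Suc n"] significant_Cons_L[of n x] sig_Cons_L_Suc[of x n]
  by (auto simp: HB_arrows_iff L_Suc intro!: exI[of _ "lsym u (Suc n)"])

lemma HB_arrow_Cons_L_other:
  assumes "consecutive_rss u (w # L u m) (x # L u n)"
  shows "(x # L u n, if x = w then sig u (w # L u m @ [\<not> lsym u (Suc m)]) else w # L u (Suc m))
    \<in> HB_arrows u"
proof -
  have "significant u (x # L u n)"
    using assms significant_Cons_L by (simp add: consecutive_rss_Cons_L_iff)
  then show ?thesis
    using sig_Cons_L_other_extension[OF assms]
    by (auto simp: HB_arrows_iff intro!: exI[of _ "\<not> lsym u (Suc n)"])
qed

lemma HB_arrows_Cons_L:
  "{(\<alpha>, \<beta>) \<in> HB_arrows u. length \<alpha> \<noteq> 1} =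
      {(x # L u n, x # L u (n + 1)) | x n. n \<ge> 1}
    \<union> {(x # L u n, w # L u (m + 1)) | x w n m.
          m < n \<and> consecutive_rss u (w # L u m) (x # L u n) \<and> x \<noteq> w}
    \<union> {(x # L u n, sig u (w # L u m @ [y])) | x w n m y.
          m < n \<and> consecutive_rss u (w # L u m) (x # L u n) \<and> x = w
          \<and> y \<noteq> lsym u (m + 1)}"
  (is "?A = ?S2 \<union> ?S3 \<union> ?S4")
proof (intro equalityI subsetI)
  fix p assume "p \<in> ?A"
  then obtain x n b where n: "n \<ge> 1" and p: "p = (x # L u n, sig u (x # L u n @ [b]))"
    and b: "x # L u n @ [b] \<in> lang u"
    by (auto simp: HB_arrows_iff significant_iff)
  consider "b = lsym u (Suc n)"
    | w m where "consecutive_rss u (w # L u m) (x # L u n)" "m < n" "b = (\<not> lsym u (Suc n))"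
    using ex_consecutive_rss[OF right_special_if_other_extension[OF b]] n
    by (auto simp: consecutive_rss_Cons_L_iff)
  then show "p \<in> ?S2 \<union> ?S3 \<union> ?S4"
  proof cases
    case 1
    with n p have "p \<in> ?S2"
      using sig_Cons_L_Suc by auto
    then show ?thesis
      by (intro UnI1)
  next
    case (2 w m)
    with p have "p \<in> (if x = w then ?S4 else ?S3)"
      using sig_Cons_L_other_extension(2)[OF 2(1)] by auto
    then show ?thesis
      by (auto split: if_splits)
  qed
next
  fix p assume "p \<in> ?S2 \<union> ?S3 \<union> ?S4"
  then consider "p \<in> ?S2" | "p \<in> ?S3" | "p \<in> ?S4"
    by blast
  then show "p \<in> ?A"
  proof cases
    case 1
    then show ?thesis
      using HB_arrow_Cons_L_Suc by auto
  next
    case 2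
    then obtain x w n m where "m < n" "consecutive_rss u (w # L u m) (x # L u n)" "x \<noteq> w"
      "p = (x # L u n, w # L u (m + 1))"
      by blast
    then show ?thesis
      using HB_arrow_Cons_L_other[of w m x n] by simp
  next
    case 3
    then obtain x n m y where "m < n" "consecutive_rss u (x # L u m) (x # L u n)"
      "y \<noteq> lsym u (m + 1)"
      "p = (x # L u n, sig u (x # L u m @ [y]))"
      by blast
    then show ?thesis
      using HB_arrow_Cons_L_other[of x m x n] by (cases y) auto
  qed
qed


lemma two_letters_in_lang_iff: "[c, d] \<in> lang u \<longleftrightarrow> c = lsym u 1 \<or> d = lsym u 1"
proof -
  obtain x where "right_special u [x]"
    using ex_right_special_Cons_L[of 0] right_special_Nil by auto
  then have RS: "right_special u [lsym u 1]"
    using right_special_Cons_L_eq_lsym[of x 0] by simp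
  have "[\<not> lsym u 1, lsym u 1] \<in> lang u"
    using Cons_L_in_lang[of "\<not> lsym u 1" 1] by (simp only: L_1)
  moreover have "\<not> right_special u [\<not> lsym u 1]"
    using right_special_unique[OF RS, of "[\<not> lsym u 1]"] by auto
  ultimately have "[\<not> lsym u 1, \<not> lsym u 1] \<notin> lang u"
    unfolding right_special_def by (cases "lsym u 1") auto
  with RS \<open>[\<not> lsym u 1, lsym u 1] \<in> lang u\<close> show ?thesis
    unfolding right_special_def by (cases c; cases d; cases "lsym u 1") auto
qed

lemma sig_two_letters:
  assumes "[c, d] \<in> lang u"
  shows "sig u [c, d] = (if d = lsym u 1 then [c, d] else [d])"
proof -
  have "[d] = L u n \<longleftrightarrow> n = 1 \<and> d = lsym u 1" for n
  proof
    assume d: "[d] = L u n"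
    have "length [d] = length (L u n)"
      by (simp only: d)
    then have "n = 1"
      by simp
    with d show "n = 1 \<and> d = lsym u 1"
      by (simp add: L_Suc)
  qed (simp add: L_Suc)
  then have sig_iff: "significant u [c, d] \<longleftrightarrow> d = lsym u 1"
    using assms by (auto simp: significant_iff)
  show ?thesis
  proof (cases "d = lsym u 1")
    case False
    have "sig u ([c] @ [d]) = sig u [d]"
      by (rule sig_append_nonsignificant[where m = 0]) (use False sig_iff in simp_all)
    with False show ?thesis
      by (simp add: sig_self)
  next
    case True
    then show ?thesis
      using sig_self[of u "[c, d]"] sig_iff by simp
  qed
qed

lemma HB_arrows_letters:
  "{(\<alpha>, \<beta>) \<in> HB_arrows u. length \<alpha> = 1} =
    (if lsym u 1 = False
     then {([False], [True]), ([False], [False, False]), ([True], [True, False])}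
     else {([True], [False]), ([True], [True, True]), ([False], [False, True])})"
proof -
  define a where "a = lsym u 1"
  have arrow: "([c], \<beta>) \<in> HB_arrows u \<longleftrightarrow>
      (\<exists>d. (c = a \<or> d = a) \<and> \<beta> = (if d = a then [c, d] else [d]))" for c \<beta>
  proof -
    have "[c, d] \<in> lang u \<and> \<beta> = sig u [c, d] \<longleftrightarrow>
        (c = a \<or> d = a) \<and> \<beta> = (if d = a then [c, d] else [d])" for d
      using sig_two_letters[of c d] two_letters_in_lang_iff[of c d] by (auto simp: a_def)
    then show ?thesis
      by (simp add: HB_arrows_iff)
  qed
  have "{(\<alpha>, \<beta>) \<in> HB_arrows u. length \<alpha> = 1} = {([a], [a, a]), ([a], [\<not> a]), ([\<not> a], [\<not> a, a])}"
    (is "?A = ?B")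
  proof
    show "?A \<subseteq> ?B"
    proof
      fix p assume "p \<in> ?A"
      then obtain c \<beta> where p: "p = ([c], \<beta>)" "([c], \<beta>) \<in> HB_arrows u"
        by (auto simp: length_Suc_conv)
      then obtain d where "c = a \<or> d = a" "\<beta> = (if d = a then [c, d] else [d])"
        using arrow by blast
      with p(1) show "p \<in> ?B"
        by (cases c; cases d; cases a) simp_all
    qed
  next
    have "([a], [a, a]) \<in> HB_arrows u"
      unfolding arrow by (intro exI[of _ a]) simp
    moreover have "([a], [\<not> a]) \<in> HB_arrows u"
      unfolding arrow by (intro exI[of _ "\<not> a"]) simp
    moreover have "([\<not> a], [\<not> a, a]) \<in> HB_arrows u"
      unfolding arrow by (intro exI[of _ a]) simp
    ultimately show "?B \<subseteq> ?A"
      by simp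
  qed
  then show ?thesis
    by (cases a) (auto simp: a_def)
qed

end

theorem theorem4p13:
  fixes u :: "nat \<Rightarrow> bool"
  assumes "sturmian u"
  shows "HB_vertices u = {[False], [True]} \<union> {x # L u n | x n. n \<ge> 1}
    \<and> HB_arrows u =
        (if lsym u 1 = False
         then {([False], [True]), ([False], [False, False]), ([True], [True, False])}
         else {([True], [False]), ([True], [True, True]), ([False], [False, True])})
      \<union> {(x # L u n, x # L u (n + 1)) | x n. n \<ge> 1}
      \<union> {(x # L u n, w # L u (m + 1)) | x w n m.
            m < n \<and> consecutive_rss u (w # L u m) (x # L u n) \<and> x \<noteq> w}
      \<union> {(x # L u n, sig u (w # L u m @ [y])) | x w n m y.
            m < n \<and> consecutive_rss u (w # L u m) (x # L u n) \<and> x = w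
            \<and> y \<noteq> lsym u (m + 1)}"
proof -
  interpret sturmian_seq u
    by standard (rule assms)
  have "HB_arrows u =
      {(\<alpha>, \<beta>) \<in> HB_arrows u. length \<alpha> = 1} \<union> {(\<alpha>, \<beta>) \<in> HB_arrows u. length \<alpha> \<noteq> 1}"
    by blast
  then show ?thesis
    unfolding HB_vertices_eq HB_arrows_letters HB_arrows_Cons_L by (simp add: Un_assoc)
qed

end
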